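(* In the Setting, under (SA1)–(SA2), let $\mathcal I\in\wp_k[n]$, distinct $i,j\in\mathcal I$, distinct $\alpha,\beta\in\mathcal I^{\mathtt C}$ satisfy $h(\mathcal I)h(\mathcal I^{ij}_{\alpha\beta})h(\mathcal I^i_\alpha)h(\mathcal I^i_\beta)h(\mathcal I^j_\alpha)h(\mathcal I^j_\beta)\neq0$. If $B^{ij}_{\alpha\beta}$ is a perfect square in $\Lambda$, then $Y(\mathcal I)^{ij}_{\alpha\beta}\in\mathbb C$.
   Context: Setting. $d\ge1$, $1\le k\le n$; $\mathbf t=(t_1,\dots,t_d)$ indeterminates; $\Lambda:=\mathbb C[t_1^{\pm1},\dots,t_d^{\pm1}]$ (a UFD whose units are exactly the elements $c\,\mathbf t^{\mathbf e}$, $c\in\mathbb C\setminus\{0\}$, $\mathbf e\in\mathbb Z^d$), $\mathbb F$ its fraction field, $\overline{\mathbb F}$ an algebraic closure. $[n]=\{1,\dots,n\}$, $\wp_k[n]$ the $k$-subsets. For $\mathcal I\in\wp_k[n]$: $\mathcal I^{\mathtt C}=[n]\setminus\mathcal I$; $\mathcal I^i_\alpha=(\mathcal I\setminus\{i\})\cup\{\alpha\}$; $\mathcal I^{ij}_{\alpha\beta}=(\mathcal I\setminus\{i,j\})\cup\{\alpha,\beta\}$. $\mathbf L$ ($k\times n$), $\mathbf R$ ($n\times k$) with entries in $\overline{\mathbb F}$; $\Delta_{\mathbf L}(\mathcal I)$, $\Delta_{\mathbf R}(\mathcal I)$ maximal minors on columns, resp. rows, $\mathcal I$; $h(\mathcal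 I):=\Delta_{\mathbf L}(\mathcal I)\Delta_{\mathbf R}(\mathcal I)$; $\mathfrak G:=\{\mathcal I:\Delta_{\mathbf L}(\mathcal I)\ne0\}$. (SA1) all $\Delta_{\mathbf R}(\mathcal I)\ne0$; (SA2) $h(\mathcal I)$ is a unit of $\Lambda$ for every $\mathcal I\in\mathfrak G$. $Y(\mathcal I)^{ij}_{\alpha\beta}:=-\mathrm{sign}[(i-\alpha)(i-\beta)(j-\alpha)(j-\beta)]\frac{\Delta_{\mathbf R}(\mathcal I^i_\alpha)\Delta_{\mathbf R}(\mathcal I^j_\beta)}{\Delta_{\mathbf R}(\mathcal I^i_\beta)\Delta_{\mathbf R}(\mathcal I^j_\alpha)}$. $A^{ij}_{\alpha\beta}:=h(\mathcal I)h(\mathcal I^{ij}_{\alpha\beta})-h(\mathcal I^i_\alpha)h(\mathcal I^j_\beta)-h(\mathcal I^i_\beta)h(\mathcal I^j_\alpha)$, $B^{ij}_{\alpha\beta}:=(A^{ij}_{\alpha\beta})^2-4h(\mathcal I^i_\alpha)h(\mathcal I^j_\beta)h(\mathcal I^i_\beta)h(\mathcal I^j_\alpha)$. *)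

theory Defs
  imports "HOL-Library.Poly_Mapping" "HOL-Computational_Algebra.Polynomial"
    "Jordan_Normal_Form.Determinant" "Jordan_Normal_Form.DL_Submatrix"
begin

text \<open>Laurent polynomials with complex coefficients: finitely supported maps from
  integer exponent vectors (indexed by nat) to complex coefficients; multiplication is
  the group-algebra product.\<close>
type_synonym lpoly = "(nat \<Rightarrow>\<^sub>0 int) \<Rightarrow>\<^sub>0 complex"

text \<open>Lambda = C[t_1^{+-1},...,t_d^{+-1}]: the subring of Laurent polynomials only
  involving the variables with index < d (t_{i+1} corresponds to index i).\<close>
definition Lam :: "nat \<Rightarrow> lpoly set" where
  "Lam d = {p. \<forall>e \<in> Poly_Mapping.keys p. Poly_Mapping.keys e \<subseteq> {..<d}}"

definition lconst :: "complex \<Rightarrow> lpoly" where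
  "lconst c = Poly_Mapping.single 0 c"

definition unit_of_Lam :: "nat \<Rightarrow> lpoly \<Rightarrow> bool" where
  "unit_of_Lam d u \<longleftrightarrow> u \<in> Lam d \<and> (\<exists>v \<in> Lam d. u * v = 1)"

text \<open>emb realises Fbar as an algebraic closure of the fraction field of Lambda:
  an injective ring embedding of Lambda into an algebraically closed field such that
  every element of the field is algebraic over the image of Lambda.\<close>
definition is_alg_closure_emb :: "nat \<Rightarrow> (lpoly \<Rightarrow> 'a :: alg_closed_field) \<Rightarrow> bool" where
  "is_alg_closure_emb d emb \<longleftrightarrow>
     emb 0 = 0 \<and> emb 1 = 1 \<and>
     (\<forall>p \<in> Lam d. \<forall>q \<in> Lam d. emb (p + q) = emb p + emb q \<and> emb (p * q) = emb p * emb q) \<and>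
     inj_on emb (Lam d) \<and>
     (\<forall>x :: 'a. \<exists>P :: lpoly poly. P \<noteq> 0 \<and> (\<forall>i. coeff P i \<in> Lam d) \<and>
          poly (map_poly emb P) x = 0)"

text \<open>Index sets are k-subsets of {0..<n} (0-based version of [n]).\<close>
definition ksubsets :: "nat \<Rightarrow> nat \<Rightarrow> nat set set" where
  "ksubsets k n = {I. I \<subseteq> {0..<n} \<and> card I = k}"

definition swap1 :: "nat set \<Rightarrow> nat \<Rightarrow> nat \<Rightarrow> nat set" where
  "swap1 I i a = insert a (I - {i})"

definition swap2 :: "nat set \<Rightarrow> nat \<Rightarrow> nat \<Rightarrow> nat \<Rightarrow> nat \<Rightarrow> nat set" where
  "swap2 I i j a b = insert a (insert b (I - {i, j}))"

definition DeltaL :: "nat \<Rightarrow> 'a :: comm_ring_1 mat \<Rightarrow> nat set \<Rightarrow> 'a" where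
  "DeltaL k L I = det (submatrix L {0..<k} I)"

definition DeltaR :: "nat \<Rightarrow> 'a :: comm_ring_1 mat \<Rightarrow> nat set \<Rightarrow> 'a" where
  "DeltaR k R I = det (submatrix R I {0..<k})"

definition hh :: "nat \<Rightarrow> 'a :: comm_ring_1 mat \<Rightarrow> 'a mat \<Rightarrow> nat set \<Rightarrow> 'a" where
  "hh k L R I = DeltaL k L I * DeltaR k R I"

definition Yc :: "nat \<Rightarrow> 'a :: field mat \<Rightarrow> nat set \<Rightarrow> nat \<Rightarrow> nat \<Rightarrow> nat \<Rightarrow> nat \<Rightarrow> 'a" where
  "Yc k R I i j a b =
     - of_int (sgn ((int i - int a) * (int i - int b) * (int j - int a) * (int j - int b)))
     * (DeltaR k R (swap1 I i a) * DeltaR k R (swap1 I j b))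
       / (DeltaR k R (swap1 I i b) * DeltaR k R (swap1 I j a))"

definition Ac :: "nat \<Rightarrow> 'a :: comm_ring_1 mat \<Rightarrow> 'a mat \<Rightarrow> nat set \<Rightarrow> nat \<Rightarrow> nat \<Rightarrow> nat \<Rightarrow> nat \<Rightarrow> 'a" where
  "Ac k L R I i j a b =
     hh k L R I * hh k L R (swap2 I i j a b)
     - hh k L R (swap1 I i a) * hh k L R (swap1 I j b)
     - hh k L R (swap1 I i b) * hh k L R (swap1 I j a)"

definition Bc :: "nat \<Rightarrow> 'a :: comm_ring_1 mat \<Rightarrow> 'a mat \<Rightarrow> nat set \<Rightarrow> nat \<Rightarrow> nat \<Rightarrow> nat \<Rightarrow> nat \<Rightarrow> 'a" where
  "Bc k L R I i j a b =
     (Ac k L R I i j a b)^2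
     - 4 * hh k L R (swap1 I i a) * hh k L R (swap1 I j b)
         * hh k L R (swap1 I i b) * hh k L R (swap1 I j a)"

end

(* By the three-term Pluecker relation, applied with the same signs to the maximal
   minors of L and of R, h(I) h(I^ij_ab) = (e1 P1 + e2 P2)(e1 Q1 + e2 Q2) with e1, e2 = +-1,
   P1 Q1 = h(I^i_a) h(I^j_b) and P2 Q2 = h(I^i_b) h(I^j_a), where the P are products of minors of L
   and the Q of minors of R; moreover Y = +-Q1/Q2. Then B = (P1 Q2 - P2 Q1)^2, so if B is a square
   in Lambda the two numbers P1 Q2 and P2 Q1, whose sum and product lie in Lambda, lie in Lambda
   themselves; their product is a unit, hence both are units. So X = Q1/Q2 and P1/P2 are units,
   and h(I) h(I^ij_ab) = P2 Q2 (1 + e P1/P2)(1 + e X) with e = e1 e2 shows that 1 + e X is a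
   unit as well. Units of a Laurent polynomial ring are monomials, and a monomial x for which
   1 + x is also a monomial is a constant. *)

theory Submission
  imports Defs
begin

section \<open>Units of Laurent polynomial rings\<close>

lemma lookup_mult_sum_keys:
  fixes f g :: "'a::ab_group_add \<Rightarrow>\<^sub>0 'b::comm_semiring_0"
  shows "Poly_Mapping.lookup (f * g) k
    = (\<Sum>l\<in>Poly_Mapping.keys f. Poly_Mapping.lookup f l * Poly_Mapping.lookup g (k - l))"
proof -
  have "Poly_Mapping.lookup (f * g) k
      = (\<Sum>l. Poly_Mapping.lookup f l * (\<Sum>q. Poly_Mapping.lookup g q when k = l + q))"
    by (rule lookup_mult)
  also have "\<dots> = (\<Sum>l. Poly_Mapping.lookup f l * Poly_Mapping.lookup g (k - l))"
  proof -
    have "(\<Sum>q. Poly_Mapping.lookup g q when k = l + q) = (\<Sum>q. Poly_Mapping.lookup g q when q = k - l)"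
      for l by (rule Sum_any.cong) (auto simp: when_def algebra_simps)
    then show ?thesis by (simp add: when_def)
  qed
  also have "\<dots> = (\<Sum>l\<in>Poly_Mapping.keys f. Poly_Mapping.lookup f l * Poly_Mapping.lookup g (k - l))"
    by (rule Sum_any.expand_superset) (auto simp: in_keys_iff)
  finally show ?thesis .
qed

lemma lookup_mult_unique_decomposition:
  fixes f g :: "'a::ab_group_add \<Rightarrow>\<^sub>0 'b::comm_semiring_0"
  assumes "a \<in> Poly_Mapping.keys f"
    and unique: "\<And>a' b'. a' \<in> Poly_Mapping.keys f \<Longrightarrow> b' \<in> Poly_Mapping.keys g \<Longrightarrow> a' + b' = a + b \<Longrightarrow> a' = a"
  shows "Poly_Mapping.lookup (f * g) (a + b) = Poly_Mapping.lookup f a * Poly_Mapping.lookup g b"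
proof -
  have "Poly_Mapping.lookup f l * Poly_Mapping.lookup g (a + b - l) = 0"
    if "l \<in> Poly_Mapping.keys f - {a}" for l
  proof (cases "a + b - l \<in> Poly_Mapping.keys g")
    case True
    have "l + (a + b - l) = a + b" by (simp add: algebra_simps)
    with unique[OF _ True] that show ?thesis by auto
  qed (simp add: in_keys_iff)
  then have "(\<Sum>l\<in>Poly_Mapping.keys f - {a}. Poly_Mapping.lookup f l * Poly_Mapping.lookup g (a + b - l)) = 0"
    by (rule sum.neutral[OF ballI])
  with assms(1) show ?thesis
    by (simp add: lookup_mult_sum_keys sum.remove)
qed

lemma eq_if_add_eq_and_le:
  fixes a a' b b' :: "'a::linordered_ab_group_add"
  assumes "a' \<le> a" "b' \<le> b" "a' + b' = a + b"
  shows "a' = a"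
proof (rule ccontr)
  assume "a' \<noteq> a"
  with assms(1) have "a' < a" by simp
  then have "a' + b' < a + b"
    using assms(2) by (rule add_less_le_mono)
  with assms(3) show False by simp
qed

lemma Max_keys_mult:
  fixes f g :: "'a::linordered_ab_group_add \<Rightarrow>\<^sub>0 'b::idom"
  assumes "f \<noteq> 0" "g \<noteq> 0"
  shows "Max (Poly_Mapping.keys f) + Max (Poly_Mapping.keys g) \<in> Poly_Mapping.keys (f * g)"
proof -
  let ?a = "Max (Poly_Mapping.keys f)" and ?b = "Max (Poly_Mapping.keys g)"
  have a: "?a \<in> Poly_Mapping.keys f" and b: "?b \<in> Poly_Mapping.keys g"
    using assms by simp_all
  have "Poly_Mapping.lookup (f * g) (?a + ?b) = Poly_Mapping.lookup f ?a * Poly_Mapping.lookup g ?b"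
  proof (rule lookup_mult_unique_decomposition[OF a])
    fix a' b' assume "a' \<in> Poly_Mapping.keys f" "b' \<in> Poly_Mapping.keys g" and sum: "a' + b' = ?a + ?b"
    then have "a' \<le> ?a" "b' \<le> ?b" by simp_all
    then show "a' = ?a" using sum by (rule eq_if_add_eq_and_le)
  qed
  with a b show ?thesis by (simp add: in_keys_iff)
qed

lemma Min_keys_mult:
  fixes f g :: "'a::linordered_ab_group_add \<Rightarrow>\<^sub>0 'b::idom"
  assumes "f \<noteq> 0" "g \<noteq> 0"
  shows "Min (Poly_Mapping.keys f) + Min (Poly_Mapping.keys g) \<in> Poly_Mapping.keys (f * g)"
proof -
  let ?a = "Min (Poly_Mapping.keys f)" and ?b = "Min (Poly_Mapping.keys g)"
  have a: "?a \<in> Poly_Mapping.keys f" and b: "?b \<in> Poly_Mapping.keys g"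
    using assms by simp_all
  have "Poly_Mapping.lookup (f * g) (?a + ?b) = Poly_Mapping.lookup f ?a * Poly_Mapping.lookup g ?b"
  proof (rule lookup_mult_unique_decomposition[OF a])
    fix a' b' assume "a' \<in> Poly_Mapping.keys f" "b' \<in> Poly_Mapping.keys g" and sum: "a' + b' = ?a + ?b"
    then have "?a \<le> a'" "?b \<le> b'" by simp_all
    then have "?a = a'" using sum[symmetric] by (rule eq_if_add_eq_and_le)
    then show "a' = ?a" ..
  qed
  with a b show ?thesis by (simp add: in_keys_iff)
qed

lemma single_if_keys_eq_singleton:
  assumes "Poly_Mapping.keys f = {e}"
  shows "\<exists>c. f = Poly_Mapping.single e c \<and> c \<noteq> 0"
proof (intro exI conjI)
  show "f = Poly_Mapping.single e (Poly_Mapping.lookup f e)"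
  proof (rule poly_mapping_eqI)
    fix k
    show "Poly_Mapping.lookup f k = Poly_Mapping.lookup (Poly_Mapping.single e (Poly_Mapping.lookup f e)) k"
    proof (cases "k = e")
      case False
      then have "k \<notin> Poly_Mapping.keys f" using assms by simp
      with False show ?thesis by (simp add: not_in_keys_iff_lookup_eq_zero lookup_single_not_eq)
    qed simp
  qed
  have "e \<in> Poly_Mapping.keys f" using assms by simp
  then show "Poly_Mapping.lookup f e \<noteq> 0" by (simp add: in_keys_iff)
qed

lemma mult_eq_one_imp_single:
  fixes f g :: "'a::linordered_ab_group_add \<Rightarrow>\<^sub>0 'b::idom"
  assumes "f * g = 1"
  shows "\<exists>e c. f = Poly_Mapping.single e c \<and> c \<noteq> 0"
proof -
  let ?F = "Poly_Mapping.keys f" and ?G = "Poly_Mapping.keys g"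
  have "f \<noteq> 0" "g \<noteq> 0" using assms by auto
  then have "Max ?F + Max ?G = 0" "Min ?F + Min ?G = 0"
    and "Min ?F \<le> Max ?F" "Min ?G \<le> Max ?G"
    using Max_keys_mult[of f g] Min_keys_mult[of f g] assms by simp_all
  then have "Min ?F = Max ?F"
    using eq_if_add_eq_and_le[of "Min ?F" "Max ?F" "Min ?G" "Max ?G"] by simp
  define e where "e = Max ?F"
  have "e \<in> ?F"
    unfolding e_def using \<open>f \<noteq> 0\<close> by simp
  moreover have "x = e" if "x \<in> ?F" for x
  proof -
    have "Min ?F \<le> x" "x \<le> Max ?F"
      using that by simp_all
    with \<open>Min ?F = Max ?F\<close> show ?thesis
      unfolding e_def by simp
  qed
  ultimately have "?F = {e}"
    by blast
  then show ?thesis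
    using exI[where P = "\<lambda>e. \<exists>c. f = Poly_Mapping.single e c \<and> c \<noteq> 0", OF single_if_keys_eq_singleton]
    by blast
qed

lemma const_if_unit_and_one_plus_unit:
  fixes x y z :: "'a::linordered_ab_group_add \<Rightarrow>\<^sub>0 'b::idom"
  assumes "x * y = 1" "(1 + x) * z = 1"
  shows "\<exists>c. x = Poly_Mapping.single 0 c"
proof -
  obtain e c where x: "x = Poly_Mapping.single e c" "c \<noteq> 0"
    using mult_eq_one_imp_single[OF assms(1)] by blast
  obtain e' c' where x': "1 + x = Poly_Mapping.single e' c'"
    using mult_eq_one_imp_single[OF assms(2)] by blast
  show ?thesis
  proof (cases "e = 0")
    case False
    have "Poly_Mapping.lookup (1 + x) 0 = 1"
      using False x by (simp add: lookup_add lookup_single lookup_one)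
    then have "e' = 0"
      using x' by (auto simp: lookup_single when_def split: if_splits)
    moreover have "Poly_Mapping.lookup (1 + x) e = c"
      using False x by (simp add: lookup_add lookup_single lookup_one)
    ultimately have False
      using x' x(2) False by (simp add: lookup_single)
    then show ?thesis ..
  next
    case True
    with x(1) have "x = Poly_Mapping.single 0 c" by simp
    then show ?thesis ..
  qed
qed

section \<open>The image of Lambda in the field\<close>

lemma Lam_add: "p \<in> Lam d \<Longrightarrow> q \<in> Lam d \<Longrightarrow> p + q \<in> Lam d"
  unfolding Lam_def using keys_add[of p q] by auto

lemma Lam_mult: "p \<in> Lam d \<Longrightarrow> q \<in> Lam d \<Longrightarrow> p * q \<in> Lam d"
proof -
  assume p: "p \<in> Lam d" and q: "q \<in> Lam d"
  have "Poly_Mapping.keys e \<subseteq> {..<d}" if "e \<in> Poly_Mapping.keys (p * q)" for e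
  proof -
    obtain a b where "e = a + b" "a \<in> Poly_Mapping.keys p" "b \<in> Poly_Mapping.keys q"
      using keys_mult \<open>e \<in> Poly_Mapping.keys (p * q)\<close> by blast
    then show ?thesis
      using p q keys_add[of a b] unfolding Lam_def by blast
  qed
  then show ?thesis by (simp add: Lam_def)
qed

lemma Lam_uminus: "p \<in> Lam d \<Longrightarrow> - p \<in> Lam d"
  unfolding Lam_def by simp

lemma Lam_lconst: "lconst c \<in> Lam d"
  unfolding Lam_def lconst_def by auto

lemma lconst_of_int: "lconst (of_int z) = of_int z"
  by (simp add: lconst_def)

lemma lconst_mult: "lconst (a * b) = lconst a * lconst b"
  by (simp add: lconst_def mult_single)

lemma Lam_of_int: "of_int z \<in> Lam d"
  using Lam_lconst[of "of_int z" d] by (simp add: lconst_of_int)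

lemma cross_terms_eq_signed_product:
  fixes e1 e2 P1 P2 Q1 Q2 :: "'a::comm_ring_1"
  assumes "e1 * e1 = 1" "e2 * e2 = 1"
  shows "P1 * Q2 + P2 * Q1 = e1 * e2 * ((e1 * P1 + e2 * P2) * (e1 * Q1 + e2 * Q2) - P1 * Q1 - P2 * Q2)"
proof -
  have "(e1 * P1 + e2 * P2) * (e1 * Q1 + e2 * Q2) - P1 * Q1 - P2 * Q2
      = (e1 * e1 - 1) * (P1 * Q1) + (e2 * e2 - 1) * (P2 * Q2) + e1 * e2 * (P1 * Q2 + P2 * Q1)"
    by (simp add: algebra_simps)
  also have "\<dots> = e1 * e2 * (P1 * Q2 + P2 * Q1)"
    using assms by simp
  finally have "e1 * e2 * ((e1 * P1 + e2 * P2) * (e1 * Q1 + e2 * Q2) - P1 * Q1 - P2 * Q2)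
      = (e1 * e1) * (e2 * e2) * (P1 * Q2 + P2 * Q1)"
    by (simp add: ac_simps)
  then show ?thesis using assms by simp
qed

lemma signed_sums_product_eq:
  fixes e1 e2 P1 P2 Q1 Q2 :: "'a::comm_ring_1"
  assumes "e1 * e1 = 1" "e2 * e2 = 1"
  shows "(e1 * P1 + e2 * P2) * (e1 * Q1 + e2 * Q2) = (P2 + e1 * e2 * P1) * (Q2 + e1 * e2 * Q1)"
proof -
  have "(e1 * P1 + e2 * P2) * (e1 * Q1 + e2 * Q2)
      = (e1 * e1) * (P1 * Q1) + e1 * e2 * (P1 * Q2 + P2 * Q1) + (e2 * e2) * (P2 * Q2)"
    by (simp add: algebra_simps)
  moreover have "(P2 + e1 * e2 * P1) * (Q2 + e1 * e2 * Q1)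
      = (e1 * e1) * (e2 * e2) * (P1 * Q1) + e1 * e2 * (P1 * Q2 + P2 * Q1) + P2 * Q2"
    by (simp add: algebra_simps)
  ultimately show ?thesis using assms by simp
qed

locale Lam_embedding =
  fixes d :: nat and emb :: "lpoly \<Rightarrow> 'a::field"
  assumes emb_one: "emb 1 = 1"
    and emb_add: "p \<in> Lam d \<Longrightarrow> q \<in> Lam d \<Longrightarrow> emb (p + q) = emb p + emb q"
    and emb_mult: "p \<in> Lam d \<Longrightarrow> q \<in> Lam d \<Longrightarrow> emb (p * q) = emb p * emb q"
    and inj_on_emb: "inj_on emb (Lam d)"

lemma Lam_embedding_if_alg_closure_emb:
  "is_alg_closure_emb d emb \<Longrightarrow> Lam_embedding d emb"
  unfolding is_alg_closure_emb_def by unfold_locales blast+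

context Lam_embedding
begin

lemma emb_zero: "emb 0 = 0"
proof -
  have "emb 0 = emb 0 + emb 0"
    using emb_add[of 0 0] Lam_of_int[of 0 d] by simp
  then show ?thesis by (simp only: add_cancel_right_right)
qed

lemma emb_uminus: "p \<in> Lam d \<Longrightarrow> emb (- p) = - emb p"
  using emb_add[of p "- p"] Lam_uminus[of p d] emb_zero by (simp add: eq_neg_iff_add_eq_0 add.commute)

lemma emb_of_int: "emb (of_int z) = of_int z"
proof (induction z rule: int_induct[where k = 0])
  case base
  show ?case by (simp add: emb_zero)
next
  case (step1 i)
  then show ?case using emb_add[OF Lam_of_int Lam_of_int[of 1]] by (simp add: emb_one)
next
  case (step2 i)
  then show ?case
    using emb_add[OF Lam_of_int Lam_uminus[OF Lam_of_int[of 1]]] emb_uminus[OF Lam_of_int[of 1]]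
    by (simp add: emb_one)
qed

lemma of_int_mult_emb_lconst: "of_int z * emb (lconst c) = emb (lconst (of_int z * c))"
  using emb_mult[OF Lam_lconst Lam_lconst, of "of_int z" c] by (simp add: lconst_mult lconst_of_int emb_of_int)

lemma mult_eq_one_if_emb:
  assumes "p \<in> Lam d" "q \<in> Lam d" "emb p * emb q = 1"
  shows "p * q = 1"
  using inj_onD[OF inj_on_emb, of "p * q" 1] assms emb_mult emb_one Lam_mult Lam_of_int[of 1 d] by simp

definition Lam_image :: "'a set" where
  "Lam_image = emb ` Lam d"

lemma emb_in_Lam_image: "p \<in> Lam d \<Longrightarrow> emb p \<in> Lam_image"
  by (simp add: Lam_image_def)

lemma of_int_in_Lam_image: "of_int z \<in> Lam_image"
  using emb_in_Lam_image[OF Lam_of_int] by (simp add: emb_of_int)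

lemma Lam_imageE:
  assumes "x \<in> Lam_image"
  obtains p where "p \<in> Lam d" "x = emb p"
  using assms unfolding Lam_image_def by blast

lemma Lam_image_add: "x \<in> Lam_image \<Longrightarrow> y \<in> Lam_image \<Longrightarrow> x + y \<in> Lam_image"
  by (elim Lam_imageE) (simp add: emb_add[symmetric] emb_in_Lam_image Lam_add)

lemma Lam_image_mult: "x \<in> Lam_image \<Longrightarrow> y \<in> Lam_image \<Longrightarrow> x * y \<in> Lam_image"
  by (elim Lam_imageE) (simp add: emb_mult[symmetric] emb_in_Lam_image Lam_mult)

lemma Lam_image_uminus: "x \<in> Lam_image \<Longrightarrow> - x \<in> Lam_image"
  by (elim Lam_imageE) (simp add: emb_uminus[symmetric] emb_in_Lam_image Lam_uminus)

lemma Lam_image_diff: "x \<in> Lam_image \<Longrightarrow> y \<in> Lam_image \<Longrightarrow> x - y \<in> Lam_image"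
  using Lam_image_add[of x "- y"] Lam_image_uminus[of y] by simp

lemma two_mult_emb_half: "2 * emb (lconst (1 / 2)) = 1"
  using of_int_mult_emb_lconst[of 2 "1 / 2"] by (simp add: lconst_def emb_one)

lemma two_neq_zero: "(2::'a) \<noteq> 0"
  using two_mult_emb_half by auto

lemma inverse_two_in_Lam_image: "inverse 2 \<in> Lam_image"
proof -
  from two_mult_emb_half have "inverse 2 = emb (lconst (1 / 2))"
    by (rule inverse_unique)
  then show ?thesis
    using emb_in_Lam_image[OF Lam_lconst] by (simp only:)
qed

definition Lam_image_units :: "'a set" where
  "Lam_image_units = {x \<in> Lam_image. x \<noteq> 0 \<and> inverse x \<in> Lam_image}"

lemma Lam_image_units_subset: "Lam_image_units \<subseteq> Lam_image"
  by (auto simp: Lam_image_units_def)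

lemma emb_unit_in_Lam_image_units:
  assumes "unit_of_Lam d u"
  shows "emb u \<in> Lam_image_units"
proof -
  obtain v where "u \<in> Lam d" "v \<in> Lam d" "u * v = 1"
    using assms by (auto simp: unit_of_Lam_def)
  then have "emb u * emb v = 1"
    by (simp add: emb_mult[symmetric] emb_one)
  then have "emb u \<noteq> 0" "inverse (emb u) = emb v"
    by (auto intro: inverse_unique)
  with \<open>u \<in> Lam d\<close> \<open>v \<in> Lam d\<close> show ?thesis
    by (simp add: Lam_image_units_def emb_in_Lam_image)
qed

lemma Lam_image_units_mult:
  "x \<in> Lam_image_units \<Longrightarrow> y \<in> Lam_image_units \<Longrightarrow> x * y \<in> Lam_image_units"
  by (simp add: Lam_image_units_def Lam_image_mult)

lemma Lam_image_units_inverse: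
  "x \<in> Lam_image_units \<Longrightarrow> inverse x \<in> Lam_image_units"
  by (simp add: Lam_image_units_def)

lemma Lam_image_units_sign:
  assumes "s = 1 \<or> s = -1"
  shows "s \<in> Lam_image_units"
  using assms of_int_in_Lam_image[of 1] of_int_in_Lam_image[of "-1"]
  by (auto simp: Lam_image_units_def)

lemma Lam_image_units_factor:
  assumes "x \<in> Lam_image" "y \<in> Lam_image" "x * y \<in> Lam_image_units"
  shows "x \<in> Lam_image_units"
proof -
  have xy: "x * y \<noteq> 0" "inverse (x * y) \<in> Lam_image"
    using assms(3) by (simp_all add: Lam_image_units_def)
  then have "inverse x = y * inverse (x * y)"
    by (simp add: nonzero_inverse_mult_distrib mult.assoc[symmetric] right_inverse)
  also have "\<dots> \<in> Lam_image"
    using assms(2) xy(2) by (rule Lam_image_mult)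
  finally show ?thesis
    using assms(1) xy(1) by (simp add: Lam_image_units_def)
qed

lemma const_if_Lam_image_units:
  assumes x: "x \<in> Lam_image_units" and x1: "1 + x \<in> Lam_image_units"
  shows "\<exists>c. x = emb (lconst c)"
proof -
  obtain p p' r where p: "p \<in> Lam d" "x = emb p" and p': "p' \<in> Lam d" "inverse x = emb p'"
    and r: "r \<in> Lam d" "inverse (1 + x) = emb r"
    using x x1 by (auto simp: Lam_image_units_def elim!: Lam_imageE)
  have "x * inverse x = 1" "(1 + x) * inverse (1 + x) = 1"
    using x x1 by (simp_all add: Lam_image_units_def)
  have "p * p' = 1"
  proof (rule mult_eq_one_if_emb)
    show "emb p * emb p' = 1"
      unfolding p(2)[symmetric] p'(2)[symmetric] by fact
  qed (fact p(1) p'(1))+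
  moreover have "(1 + p) * r = 1"
  proof (rule mult_eq_one_if_emb)
    have "emb (1 + p) = 1 + x"
      using p Lam_of_int[of 1 d] by (simp add: emb_add emb_one)
    then show "emb (1 + p) * emb r = 1"
      unfolding r(2)[symmetric] by (simp only: \<open>(1 + x) * inverse (1 + x) = 1\<close>)
    show "1 + p \<in> Lam d"
      using p(1) Lam_add Lam_of_int[of 1 d] by simp
  qed (fact r(1))
  ultimately obtain c where "p = Poly_Mapping.single 0 c"
    using const_if_unit_and_one_plus_unit by blast
  then show ?thesis
    using p(2) by (auto simp: lconst_def)
qed

lemma in_Lam_image_if_square_difference:
  assumes "x + y \<in> Lam_image" "(x - y)\<^sup>2 = q\<^sup>2" "q \<in> Lam_image"
  shows "x \<in> Lam_image"
proof -
  have "(x - y - q) * (x - y + q) = 0"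
    using assms(2) by (simp add: power2_eq_square algebra_simps)
  then have "x - y = q \<or> x - y = - q"
    by (simp add: eq_neg_iff_add_eq_0)
  then have "x - y \<in> Lam_image"
    using assms(3) Lam_image_uminus by auto
  have "x = inverse 2 * ((x + y) + (x - y))"
    using two_neq_zero by (simp add: mult_2[symmetric] mult.assoc[symmetric])
  then show ?thesis
    using assms(1) \<open>x - y \<in> Lam_image\<close> inverse_two_in_Lam_image
    by (metis Lam_image_add Lam_image_mult)
qed

lemma Lam_image_units_divide:
  "x \<in> Lam_image_units \<Longrightarrow> y \<in> Lam_image_units \<Longrightarrow> x / y \<in> Lam_image_units"
  unfolding divide_inverse by (intro Lam_image_units_mult Lam_image_units_inverse)

lemma unit_if_square_difference:
  assumes "x * y \<in> Lam_image_units" "x + y \<in> Lam_image" "(x - y)\<^sup>2 = q\<^sup>2" "q \<in> Lam_image"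
  shows "x \<in> Lam_image_units"
proof (rule Lam_image_units_factor)
  show x: "x \<in> Lam_image"
    using assms(2-4) by (rule in_Lam_image_if_square_difference)
  show "y \<in> Lam_image"
    using Lam_image_diff[OF assms(2) x] by simp
qed (fact assms(1))

lemma const_if_one_plus_sign_mult_divides_unit:
  assumes x: "x \<in> Lam_image_units" and s: "s = 1 \<or> s = -1"
    and y: "y \<in> Lam_image" and unit: "(1 + s * x) * y \<in> Lam_image_units"
  shows "\<exists>c. x = emb (lconst c)"
proof -
  have sx: "s * x \<in> Lam_image_units"
    using Lam_image_units_sign[OF s] x by (rule Lam_image_units_mult)
  have "1 + s * x \<in> Lam_image"
    using of_int_in_Lam_image[of 1] sx Lam_image_units_subset by (auto intro: Lam_image_add)
  then have "1 + s * x \<in> Lam_image_units"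
    using y unit by (rule Lam_image_units_factor)
  with sx obtain c where c: "s * x = emb (lconst c)"
    using const_if_Lam_image_units by blast
  obtain z :: int where z: "s = of_int z"
    using s by (metis of_int_1 of_int_minus)
  have "x = s * (s * x)"
    using s by auto
  also have "\<dots> = emb (lconst (of_int z * c))"
    unfolding c unfolding z by (rule of_int_mult_emb_lconst)
  finally show ?thesis ..
qed

lemma ratio_const_if_discriminant_square:
  fixes e1 e2 P1 P2 Q1 Q2 H q :: 'a
  assumes e1: "e1 = 1 \<or> e1 = -1" and e2: "e2 = 1 \<or> e2 = -1"
    and H: "H \<in> Lam_image_units" and H_eq: "H = (e1 * P1 + e2 * P2) * (e1 * Q1 + e2 * Q2)"
    and u1: "P1 * Q1 \<in> Lam_image_units" and u2: "P2 * Q2 \<in> Lam_image_units"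
    and disc: "(H - P1 * Q1 - P2 * Q2)\<^sup>2 - 4 * (P1 * Q1) * (P2 * Q2) = q\<^sup>2"
    and q: "q \<in> Lam_image"
  shows "\<exists>c. Q1 / Q2 = emb (lconst c)"
proof -
  define \<epsilon> where "\<epsilon> = e1 * e2"
  have sq1: "e1 * e1 = 1" "e2 * e2 = 1"
    using e1 e2 by auto
  have \<epsilon>: "\<epsilon> = 1 \<or> \<epsilon> = -1"
    using e1 e2 by (auto simp: \<epsilon>_def)
  have sum: "P1 * Q2 + P2 * Q1 = \<epsilon> * (H - P1 * Q1 - P2 * Q2)"
    unfolding H_eq \<epsilon>_def using sq1 by (rule cross_terms_eq_signed_product)
  have "(P1 * Q2 - P2 * Q1)\<^sup>2 = (P1 * Q2 + P2 * Q1)\<^sup>2 - 4 * (P1 * Q1) * (P2 * Q2)"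
    by (simp add: power2_eq_square algebra_simps)
  also have "(P1 * Q2 + P2 * Q1)\<^sup>2 = (H - P1 * Q1 - P2 * Q2)\<^sup>2"
    unfolding sum power_mult_distrib using \<epsilon> by auto
  finally have sq_diff: "(P1 * Q2 - P2 * Q1)\<^sup>2 = q\<^sup>2"
    using disc by simp
  have "(P1 * Q2) * (P2 * Q1) \<in> Lam_image_units"
    using Lam_image_units_mult[OF u1 u2] by (simp add: ac_simps)
  moreover have "P1 * Q2 + P2 * Q1 \<in> Lam_image"
    unfolding sum using Lam_image_units_sign[OF \<epsilon>] H u1 u2 Lam_image_units_subset
    by (blast intro: Lam_image_mult Lam_image_diff)
  ultimately have x: "P1 * Q2 \<in> Lam_image_units"
    using sq_diff q by (rule unit_if_square_difference)
  have nz: "P1 \<noteq> 0" "Q1 \<noteq> 0" "P2 \<noteq> 0" "Q2 \<noteq> 0"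
    using u1 u2 by (auto simp: Lam_image_units_def)
  have X: "Q1 / Q2 \<in> Lam_image_units"
    using nz Lam_image_units_divide[OF u1 x] by simp
  have W: "P1 / P2 \<in> Lam_image_units"
    using nz Lam_image_units_divide[OF x u2] by simp
  have "\<epsilon> \<in> Lam_image" "1 \<in> Lam_image" "P1 / P2 \<in> Lam_image" "P2 * Q2 \<in> Lam_image"
    using Lam_image_units_sign[OF \<epsilon>] of_int_in_Lam_image[of 1] W u2 Lam_image_units_subset by auto
  then have "(P2 * Q2) * (1 + \<epsilon> * (P1 / P2)) \<in> Lam_image"
    by (blast intro: Lam_image_mult Lam_image_add)
  moreover have "H = (P2 + \<epsilon> * P1) * (Q2 + \<epsilon> * Q1)"
    unfolding H_eq \<epsilon>_def using sq1 by (rule signed_sums_product_eq)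
  then have "(1 + \<epsilon> * (Q1 / Q2)) * ((P2 * Q2) * (1 + \<epsilon> * (P1 / P2))) \<in> Lam_image_units"
    using H nz by (simp add: algebra_simps)
  ultimately show ?thesis
    by (rule const_if_one_plus_sign_mult_divides_unit[OF X \<epsilon>])
qed

end

section \<open>Three-term Pluecker relations\<close>

definition det_rows :: "nat \<Rightarrow> (nat \<Rightarrow> 'a::comm_ring_1) list \<Rightarrow> 'a" where
  "det_rows k vs = det (mat k k (\<lambda>(r, c). (vs ! r) c))"

definition remove_nth :: "nat \<Rightarrow> 'b list \<Rightarrow> 'b list" where
  "remove_nth t xs = take t xs @ drop (Suc t) xs"

lemma nth_remove_nth:
  "t < length xs \<Longrightarrow> r < length xs - 1 \<Longrightarrow> remove_nth t xs ! r = xs ! insert_index t r"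
  unfolding remove_nth_def insert_index_def by (auto simp: nth_append min_def)

lemma det_rows_eq_0_if_equal_rows:
  assumes "length vs = k" "r1 < k" "r2 < k" "r1 \<noteq> r2" "vs ! r1 = vs ! r2"
  shows "det_rows k vs = 0"
  unfolding det_rows_def
  by (rule det_identical_rows[of _ k r1 r2]) (use assms in \<open>auto intro!: eq_vecI\<close>)

text \<open>Laplace expansion along the first column of the singular matrix whose first column
  duplicates column c of the rows us.\<close>
lemma alternating_sum_det_rows_remove_nth:
  fixes us :: "(nat \<Rightarrow> 'a::comm_ring_1) list"
  assumes len: "length us = Suc k" and c: "c < k"
  shows "(\<Sum>t<Suc k. (-1)^t * det_rows k (remove_nth t us) * (us ! t) c) = 0"
proof -
  define N where "N = mat (Suc k) (Suc k) (\<lambda>(r, c'). if c' = 0 then (us ! r) c else (us ! r) (c' - 1))"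
  have N: "N \<in> carrier_mat (Suc k) (Suc k)" by (simp add: N_def)
  have "det N = 0"
    by (rule det_identical_columns[OF N, of 0 "Suc c"]) (use c in \<open>auto simp: N_def intro!: eq_vecI\<close>)
  moreover have "det N = (\<Sum>t<Suc k. N $$ (t, 0) * cofactor N t 0)"
    by (rule laplace_expansion_column[OF N]) simp
  moreover have "N $$ (t, 0) * cofactor N t 0 = (-1)^t * det_rows k (remove_nth t us) * (us ! t) c"
    if t: "t < Suc k" for t
  proof -
    have "mat_delete N t 0 = mat k k (\<lambda>(r, c). (remove_nth t us ! r) c)"
      by (rule eq_matI) (use t len in \<open>auto simp: mat_delete_def N_def nth_remove_nth insert_index_def\<close>)
    then show ?thesis using t by (simp add: cofactor_def det_rows_def N_def)
  qed
  ultimately show ?thesis by simp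
qed

lemma alternating_sum_det_rows_remove_nth_linear:
  fixes us :: "(nat \<Rightarrow> 'a::comm_ring_1) list"
  assumes len: "length us = Suc k" and \<phi>: "\<And>v. \<phi> v = (\<Sum>c<k. v c * C c)"
  shows "(\<Sum>t<Suc k. (-1)^t * det_rows k (remove_nth t us) * \<phi> (us ! t)) = 0"
proof -
  have "(\<Sum>t<Suc k. (-1)^t * det_rows k (remove_nth t us) * \<phi> (us ! t))
      = (\<Sum>t<Suc k. \<Sum>c<k. C c * ((-1)^t * det_rows k (remove_nth t us) * (us ! t) c))"
    unfolding \<phi> by (simp add: sum_distrib_left ac_simps)
  also have "\<dots> = (\<Sum>c<k. C c * (\<Sum>t<Suc k. (-1)^t * det_rows k (remove_nth t us) * (us ! t) c))"
    by (subst sum.swap) (simp only: sum_distrib_left)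
  also have "\<dots> = 0"
    using alternating_sum_det_rows_remove_nth[OF len] by simp
  finally show ?thesis .
qed

lemma det_rows_snoc_linear:
  fixes ps :: "(nat \<Rightarrow> 'a::comm_ring_1) list"
  assumes len: "length ps = m"
  shows "\<exists>C. \<forall>v. det_rows (Suc m) (ps @ [v]) = (\<Sum>c<Suc m. v c * C c)"
proof (intro exI allI)
  fix v :: "nat \<Rightarrow> 'a"
  define Z where "Z = mat (Suc m) (Suc m) (\<lambda>(r, c). ((ps @ [\<lambda>_. 0]) ! r) c)"
  define A where "A = mat (Suc m) (Suc m) (\<lambda>(r, c). ((ps @ [v]) ! r) c)"
  have A: "A \<in> carrier_mat (Suc m) (Suc m)" by (simp add: A_def)
  have "det_rows (Suc m) (ps @ [v]) = (\<Sum>c<Suc m. A $$ (m, c) * cofactor A m c)"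
    unfolding det_rows_def A_def[symmetric] by (rule laplace_expansion_row[OF A]) simp
  also have "\<dots> = (\<Sum>c<Suc m. v c * cofactor Z m c)"
  proof (rule sum.cong[OF refl])
    fix c assume c: "c \<in> {..<Suc m}"
    have "mat_delete A m c = mat_delete Z m c"
      by (rule eq_matI) (use len in \<open>auto simp: mat_delete_def A_def Z_def nth_append\<close>)
    then show "A $$ (m, c) * cofactor A m c = v c * cofactor Z m c"
      using c len by (simp add: cofactor_def A_def nth_append)
  qed
  finally show "det_rows (Suc m) (ps @ [v]) = (\<Sum>c<Suc m. v c * cofactor Z m c)" .
qed

lemma eq_0_if_minus_one_power_mult_eq_0:
  fixes x :: "'a::comm_ring_1"
  assumes "(-1)^m * x = 0"
  shows "x = 0"
proof -
  have "x = ((-1) * (-1))^m * x" by simp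
  also have "\<dots> = (-1)^m * ((-1)^m * x)" by (simp only: power_mult_distrib mult.assoc)
  finally show ?thesis using assms by simp
qed

text \<open>Apply the alternating expansion to the rows s, x, y, z and the linear form
  v \<mapsto> det (s, w, v).\<close>
lemma plucker_det_rows:
  fixes s :: "(nat \<Rightarrow> 'a::comm_ring_1) list"
  assumes len: "length s = m"
  shows "det_rows (Suc (Suc m)) (s @ [y, z]) * det_rows (Suc (Suc m)) (s @ [w, x])
       - det_rows (Suc (Suc m)) (s @ [x, z]) * det_rows (Suc (Suc m)) (s @ [w, y])
       + det_rows (Suc (Suc m)) (s @ [x, y]) * det_rows (Suc (Suc m)) (s @ [w, z]) = 0"
proof -
  define k where "k = Suc (Suc m)"
  define us where "us = s @ [x, y, z]"
  define \<phi> where "\<phi> = (\<lambda>v. det_rows k (s @ [w, v]))"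
  define a where "a = (\<lambda>t. (-1)^t * det_rows k (remove_nth t us) * \<phi> (us ! t))"
  obtain C where "\<forall>v. det_rows k ((s @ [w]) @ [v]) = (\<Sum>c<k. v c * C c)"
    using det_rows_snoc_linear[of "s @ [w]" "Suc m"] len by (auto simp: k_def)
  then have \<phi>_linear: "\<phi> v = (\<Sum>c<k. v c * C c)" for v
    by (simp add: \<phi>_def)
  have "length us = Suc k" by (simp add: us_def len k_def)
  then have "0 = (\<Sum>t<Suc k. a t)"
    unfolding a_def by (rule alternating_sum_det_rows_remove_nth_linear[symmetric, OF _ \<phi>_linear])
  also have "\<dots> = (\<Sum>t<m. a t) + a m + a (Suc m) + a (Suc (Suc m))"
    by (simp add: k_def)
  also have "(\<Sum>t<m. a t) = 0"
  proof (rule sum.neutral, rule ballI)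
    fix t assume t: "t \<in> {..<m}"
    have "\<phi> (us ! t) = 0" unfolding \<phi>_def
      by (rule det_rows_eq_0_if_equal_rows[of _ _ t "Suc m"]) (use t len in \<open>auto simp: k_def us_def nth_append\<close>)
    then show "a t = 0" by (simp add: a_def)
  qed
  also have "us ! m = x" "us ! Suc m = y" "us ! Suc (Suc m) = z"
    using len by (auto simp: us_def nth_append)
  moreover have "remove_nth m us = s @ [y, z]" "remove_nth (Suc m) us = s @ [x, z]"
    "remove_nth (Suc (Suc m)) us = s @ [x, y]"
    using len by (auto simp: us_def remove_nth_def)
  ultimately have "(-1)^m * (det_rows k (s @ [y, z]) * \<phi> x - det_rows k (s @ [x, z]) * \<phi> y
      + det_rows k (s @ [x, y]) * \<phi> z) = 0"
    by (simp add: a_def algebra_simps)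
  then show ?thesis
    unfolding \<phi>_def k_def by (rule eq_0_if_minus_one_power_mult_eq_0)
qed

lemma det_rows_map_permute:
  fixes xs ys :: "nat list"
  assumes dx: "distinct xs" and dy: "distinct ys" and st: "set xs = set ys" and len: "length xs = k"
  shows "\<exists>\<sigma>::'a::comm_ring_1. (\<sigma> = 1 \<or> \<sigma> = -1) \<and> (\<forall>f::nat \<Rightarrow> nat \<Rightarrow> 'a. det_rows k (map f ys) = \<sigma> * det_rows k (map f xs))"
proof -
  have leny: "length ys = k" using dx dy st len by (metis distinct_card)
  define p where "p = (\<lambda>i. if i < k then (SOME r. r < k \<and> xs ! r = ys ! i) else i)"
  have ex: "\<exists>r. r < k \<and> xs ! r = ys ! i" if "i < k" for i
  proof -
    have "ys ! i \<in> set xs" using that leny st by auto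
    then show ?thesis using len by (auto simp: in_set_conv_nth)
  qed
  have pin: "p i < k" and pxs: "xs ! (p i) = ys ! i" if "i < k" for i
    using someI_ex[OF ex[OF that]] that by (auto simp: p_def)
  have inj: "inj_on p {0..<k}"
  proof (rule inj_onI)
    fix i1 i2 assume i: "i1 \<in> {0..<k}" "i2 \<in> {0..<k}" and "p i1 = p i2"
    then have "ys ! i1 = ys ! i2" using pxs by (metis atLeastLessThan_iff)
    then show "i1 = i2" using dy leny i by (simp add: nth_eq_iff_index_eq)
  qed
  have "p ` {0..<k} = {0..<k}"
  proof -
    have "p ` {0..<k} \<subseteq> {0..<k}" using pin by auto
    moreover have "card (p ` {0..<k}) = card {0..<k}" using inj by (simp add: card_image)
    ultimately show ?thesis by (simp add: card_subset_eq)
  qed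
  with inj have perm: "p permutes {0..<k}"
    by (intro bij_imp_permutes) (auto simp: bij_betw_def p_def)
  show ?thesis
  proof (intro exI conjI allI)
    show "(signof p :: 'a) = 1 \<or> signof p = -1" by (cases rule: sign_cases[of p]) auto
    fix f :: "nat \<Rightarrow> nat \<Rightarrow> 'a"
    define A where "A = mat k k (\<lambda>(r, c). (map f xs ! r) c)"
    have A: "A \<in> carrier_mat k k" by (simp add: A_def)
    have "mat k k (\<lambda>(r, c). (map f ys ! r) c) = mat k k (\<lambda>(i, j). A $$ (p i, j))"
      by (rule eq_matI) (use pin pxs leny len in \<open>auto simp: A_def\<close>)
    then have "det_rows k (map f ys) = det (mat k k (\<lambda>(i, j). A $$ (p i, j)))" by (simp add: det_rows_def)
    also have "\<dots> = signof p * det A" by (rule det_permute_rows[OF A perm])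
    finally show "det_rows k (map f ys) = signof p * det_rows k (map f xs)" by (simp add: det_rows_def A_def)
  qed
qed

definition minor_rows :: "nat \<Rightarrow> (nat \<Rightarrow> nat \<Rightarrow> 'a::comm_ring_1) \<Rightarrow> nat set \<Rightarrow> 'a" where
  "minor_rows k f J = det_rows k (map f (map (pick J) [0..<k]))"

lemma distinct_map_pick:
  assumes "finite J" "card J = k"
  shows "distinct (map (pick J) [0..<k])"
  unfolding distinct_map
  by (auto intro!: inj_onI simp: assms) (metis assms(2) linorder_neqE_nat pick_mono_le order_less_irrefl)

lemma set_map_pick:
  assumes "finite J" "card J = k"
  shows "set (map (pick J) [0..<k]) = J"
proof -
  have "set (map (pick J) [0..<k]) \<subseteq> J" using assms by (auto intro: pick_in_set_le)
  moreover have "card (set (map (pick J) [0..<k])) = card J"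
    using distinct_card[OF distinct_map_pick[OF assms]] assms by simp
  ultimately show ?thesis using assms by (simp add: card_subset_eq)
qed

lemma minor_rows_eq_sign_det_rows:
  assumes "finite J" "card J = k" "distinct xs" "set xs = J"
  shows "\<exists>\<sigma>::'a::comm_ring_1. (\<sigma> = 1 \<or> \<sigma> = -1) \<and> (\<forall>f::nat \<Rightarrow> nat \<Rightarrow> 'a. minor_rows k f J = \<sigma> * det_rows k (map f xs))"
proof -
  have "length xs = k" using assms by (metis distinct_card)
  then show ?thesis
    unfolding minor_rows_def
    using det_rows_map_permute[of xs "map (pick J) [0..<k]" k] distinct_map_pick[OF assms(1,2)]
      set_map_pick[OF assms(1,2)] assms
    by (simp add: map_map)
qed

lemma plucker_rescale_signs:
  fixes \<sigma>1 \<sigma>2 \<sigma>3 \<sigma>4 \<sigma>5 \<sigma>6 x y p q r s :: "'a::comm_ring_1"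
  assumes "\<sigma>3 * \<sigma>3 = 1" "\<sigma>4 * \<sigma>4 = 1" "\<sigma>5 * \<sigma>5 = 1" "\<sigma>6 * \<sigma>6 = 1" and "x * y = p * q - r * s"
  shows "(\<sigma>1 * x) * (\<sigma>2 * y)
    = (\<sigma>1 * \<sigma>2 * \<sigma>3 * \<sigma>4) * ((\<sigma>3 * p) * (\<sigma>4 * q)) + - (\<sigma>1 * \<sigma>2 * \<sigma>5 * \<sigma>6) * ((\<sigma>5 * r) * (\<sigma>6 * s))"
proof -
  have "(\<sigma>1 * \<sigma>2 * \<sigma>3 * \<sigma>4) * ((\<sigma>3 * p) * (\<sigma>4 * q)) + - (\<sigma>1 * \<sigma>2 * \<sigma>5 * \<sigma>6) * ((\<sigma>5 * r) * (\<sigma>6 * s))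
      = \<sigma>1 * \<sigma>2 * ((\<sigma>3 * \<sigma>3) * (\<sigma>4 * \<sigma>4) * (p * q) - (\<sigma>5 * \<sigma>5) * (\<sigma>6 * \<sigma>6) * (r * s))"
    by (simp add: algebra_simps)
  also have "\<dots> = (\<sigma>1 * x) * (\<sigma>2 * y)"
    using assms by (simp add: ac_simps)
  finally show ?thesis ..
qed

lemma minor_rows_set_append:
  assumes "distinct s" "length s = m" "x \<notin> set s" "y \<notin> set s" "x \<noteq> y"
  obtains \<sigma> :: "'a::comm_ring_1" where "\<sigma> = 1 \<or> \<sigma> = -1"
    "\<And>f. minor_rows (Suc (Suc m)) f (set (s @ [x, y])) = \<sigma> * det_rows (Suc (Suc m)) (map f (s @ [x, y]))"
proof -
  have "distinct (s @ [x, y])" using assms by auto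
  moreover from this have "card (set (s @ [x, y])) = Suc (Suc m)"
    using assms(2) by (simp add: distinct_card)
  ultimately obtain \<sigma> :: 'a where "\<sigma> = 1 \<or> \<sigma> = -1"
    "\<forall>f. minor_rows (Suc (Suc m)) f (set (s @ [x, y])) = \<sigma> * det_rows (Suc (Suc m)) (map f (s @ [x, y]))"
    using minor_rows_eq_sign_det_rows[of "set (s @ [x, y])" "Suc (Suc m)" "s @ [x, y]"] by blast
  then show thesis by (intro that) auto
qed

lemma plucker_minor_rows_set_append:
  assumes s: "distinct s" "length s = m" and notin: "i \<notin> set s" "j \<notin> set s" "a \<notin> set s" "b \<notin> set s"
    and distinct: "distinct [i, j, a, b]"
  shows "\<exists>e1 e2 :: 'a::comm_ring_1. (e1 = 1 \<or> e1 = -1) \<and> (e2 = 1 \<or> e2 = -1) \<and>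
     (\<forall>f. minor_rows (Suc (Suc m)) f (set (s @ [j, i])) * minor_rows (Suc (Suc m)) f (set (s @ [a, b])) =
        e1 * (minor_rows (Suc (Suc m)) f (set (s @ [j, a])) * minor_rows (Suc (Suc m)) f (set (s @ [i, b])))
        + e2 * (minor_rows (Suc (Suc m)) f (set (s @ [j, b])) * minor_rows (Suc (Suc m)) f (set (s @ [i, a]))))"
proof -
  let ?k = "Suc (Suc m)"
  obtain sI :: 'a where sI: "sI = 1 \<or> sI = -1"
    "\<And>f. minor_rows ?k f (set (s @ [j, i])) = sI * det_rows ?k (map f (s @ [j, i]))"
    by (rule minor_rows_set_append[OF s, where x = j and y = i]) (use notin distinct in auto)
  obtain s12 :: 'a where s12: "s12 = 1 \<or> s12 = -1"
    "\<And>f. minor_rows ?k f (set (s @ [a, b])) = s12 * det_rows ?k (map f (s @ [a, b]))"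
    by (rule minor_rows_set_append[OF s, where x = a and y = b]) (use notin distinct in auto)
  obtain sia :: 'a where sia: "sia = 1 \<or> sia = -1"
    "\<And>f. minor_rows ?k f (set (s @ [j, a])) = sia * det_rows ?k (map f (s @ [j, a]))"
    by (rule minor_rows_set_append[OF s, where x = j and y = a]) (use notin distinct in auto)
  obtain sjb :: 'a where sjb: "sjb = 1 \<or> sjb = -1"
    "\<And>f. minor_rows ?k f (set (s @ [i, b])) = sjb * det_rows ?k (map f (s @ [i, b]))"
    by (rule minor_rows_set_append[OF s, where x = i and y = b]) (use notin distinct in auto)
  obtain sib :: 'a where sib: "sib = 1 \<or> sib = -1"
    "\<And>f. minor_rows ?k f (set (s @ [j, b])) = sib * det_rows ?k (map f (s @ [j, b]))"
    by (rule minor_rows_set_append[OF s, where x = j and y = b]) (use notin distinct in auto)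
  obtain sja :: 'a where sja: "sja = 1 \<or> sja = -1"
    "\<And>f. minor_rows ?k f (set (s @ [i, a])) = sja * det_rows ?k (map f (s @ [i, a]))"
    by (rule minor_rows_set_append[OF s, where x = i and y = a]) (use notin distinct in auto)
  show ?thesis
  proof (intro exI conjI allI)
    show "sI * s12 * sia * sjb = 1 \<or> sI * s12 * sia * sjb = -1"
      "- (sI * s12 * sib * sja) = 1 \<or> - (sI * s12 * sib * sja) = -1"
      using sI(1) s12(1) sia(1) sjb(1) sib(1) sja(1) by auto
    fix f :: "nat \<Rightarrow> nat \<Rightarrow> 'a"
    let ?D = "\<lambda>x y. det_rows ?k (map f s @ [f x, f y])"
    have "?D a b * ?D j i - ?D i b * ?D j a + ?D i a * ?D j b = 0"
      using plucker_det_rows[of "map f s" m "f a" "f b" "f j" "f i"] s by simp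
    then have "?D j i * ?D a b = ?D j a * ?D i b - ?D j b * ?D i a"
      by (simp add: algebra_simps eq_neg_iff_add_eq_0)
    then show "minor_rows ?k f (set (s @ [j, i])) * minor_rows ?k f (set (s @ [a, b]))
        = sI * s12 * sia * sjb * (minor_rows ?k f (set (s @ [j, a])) * minor_rows ?k f (set (s @ [i, b])))
          + - (sI * s12 * sib * sja) * (minor_rows ?k f (set (s @ [j, b])) * minor_rows ?k f (set (s @ [i, a])))"
      unfolding sI(2) s12(2) sia(2) sjb(2) sib(2) sja(2)
      using sia(1) sjb(1) sib(1) sja(1) by (intro plucker_rescale_signs) auto
  qed
qed

lemma plucker_minor_rows:
  fixes I :: "nat set"
  assumes fin: "finite I" and cI: "card I = k" and ij: "i \<in> I" "j \<in> I" "i \<noteq> j"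
    and ab: "a \<notin> I" "b \<notin> I" "a \<noteq> b"
  shows "\<exists>e1 e2 :: 'a::comm_ring_1. (e1 = 1 \<or> e1 = -1) \<and> (e2 = 1 \<or> e2 = -1) \<and>
     (\<forall>f. minor_rows k f I * minor_rows k f (swap2 I i j a b) =
        e1 * (minor_rows k f (swap1 I i a) * minor_rows k f (swap1 I j b))
        + e2 * (minor_rows k f (swap1 I i b) * minor_rows k f (swap1 I j a)))"
proof -
  define s where "s = sorted_list_of_set (I - {i, j})"
  have s: "distinct s" "set s = I - {i, j}"
    using fin by (simp_all add: s_def)
  have "k \<ge> 2" using card_mono[OF fin, of "{i, j}"] ij cI by auto
  moreover have "card (I - {i, j}) = k - 2" using fin ij cI by (simp add: card_Diff_subset)
  then have "length s = k - 2" using s by (metis distinct_card)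
  ultimately have len: "length s = k - 2" "k = Suc (Suc (k - 2))" by simp_all
  have "I = set (s @ [j, i])" "swap2 I i j a b = set (s @ [a, b])"
    "swap1 I i a = set (s @ [j, a])" "swap1 I j b = set (s @ [i, b])"
    "swap1 I i b = set (s @ [j, b])" "swap1 I j a = set (s @ [i, a])"
    using ij ab by (auto simp: s swap1_def swap2_def)
  moreover have "i \<notin> set s" "j \<notin> set s" "a \<notin> set s" "b \<notin> set s" "distinct [i, j, a, b]"
    using ij ab by (auto simp: s)
  ultimately show ?thesis
    using plucker_minor_rows_set_append[OF s(1) len(1), where 'a = 'a] len(2) by simp
qed

lemma pick_atLeastLessThan: "r < k \<Longrightarrow> pick {0..<k} r = r"
proof (induction r)
  case 0
  then show ?case by (simp add: Least_equality)
next
  case (Suc r)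
  then have "pick {0..<k} r = r" by simp
  then show ?case using Suc.prems by (auto intro!: Least_equality)
qed

lemma DeltaR_eq_minor_rows:
  assumes R: "R \<in> carrier_mat n k" and J: "J \<subseteq> {0..<n}" "card J = k"
  shows "DeltaR k R J = minor_rows k (\<lambda>r c. R $$ (r, c)) J"
proof -
  have c1: "{i. i < dim_row R \<and> i \<in> J} = J" using R J by auto
  have c2: "{j. j < dim_col R \<and> j \<in> {0..<k}} = {0..<k}" using R by auto
  have "submatrix R J {0..<k} = mat k k (\<lambda>(r, c). (map (\<lambda>r c. R $$ (r, c)) (map (pick J) [0..<k]) ! r) c)"
    unfolding submatrix_def c1 c2 J(2) by (rule eq_matI) (auto simp: pick_atLeastLessThan)
  then show ?thesis by (simp add: DeltaR_def minor_rows_def det_rows_def)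
qed

lemma DeltaL_eq_minor_rows:
  assumes L: "L \<in> carrier_mat k n" and J: "J \<subseteq> {0..<n}" "card J = k"
  shows "DeltaL k L J = minor_rows k (\<lambda>r c. L $$ (c, r)) J"
proof -
  have c1: "{i. i < dim_col L \<and> i \<in> J} = J" using L J by auto
  have c2: "{j. j < dim_row L \<and> j \<in> {0..<k}} = {0..<k}" using L by auto
  have "submatrix L {0..<k} J = mat k k (\<lambda>(r, c). L $$ (r, pick J c))"
    unfolding submatrix_def c1 c2 J(2) by (rule eq_matI) (auto simp: pick_atLeastLessThan)
  then have "DeltaL k L J = det (mat k k (\<lambda>(r, c). L $$ (r, pick J c)))"
    by (simp add: DeltaL_def)
  also have "\<dots> = det (transpose_mat (mat k k (\<lambda>(r, c). L $$ (r, pick J c))))"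
    by (rule det_transpose[symmetric, of _ k]) simp
  also have "transpose_mat (mat k k (\<lambda>(r, c). L $$ (r, pick J c)))
      = mat k k (\<lambda>(r, c). (map (\<lambda>r c. L $$ (c, r)) (map (pick J) [0..<k]) ! r) c)"
    by (rule eq_matI) auto
  finally show ?thesis by (simp add: minor_rows_def det_rows_def)
qed

lemma swap1_in_ksubsets:
  assumes "I \<in> ksubsets k n" "i \<in> I" "a \<in> {0..<n} - I"
  shows "swap1 I i a \<in> ksubsets k n"
proof -
  have fin: "finite I" using assms(1) by (auto simp: ksubsets_def intro: finite_subset)
  have "card I > 0" using fin assms(2) by (auto simp: card_gt_0_iff)
  then show ?thesis using assms fin by (auto simp: ksubsets_def swap1_def card_insert_if)
qed

lemma swap2_in_ksubsets:
  assumes "I \<in> ksubsets k n" "i \<in> I" "j \<in> I" "i \<noteq> j" "a \<in> {0..<n} - I" "b \<in> {0..<n} - I" "a \<noteq> b"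
  shows "swap2 I i j a b \<in> ksubsets k n"
proof -
  have "swap1 I i a \<in> ksubsets k n"
    using assms by (intro swap1_in_ksubsets)
  moreover have "j \<in> swap1 I i a" "b \<in> {0..<n} - swap1 I i a"
    using assms by (auto simp: swap1_def)
  ultimately have "swap1 (swap1 I i a) j b \<in> ksubsets k n"
    by (rule swap1_in_ksubsets)
  moreover have "swap1 (swap1 I i a) j b = swap2 I i j a b"
    using assms by (auto simp: swap1_def swap2_def)
  ultimately show ?thesis by simp
qed

lemma DeltaL_DeltaR_plucker:
  fixes L R :: "'a::comm_ring_1 mat"
  assumes L: "L \<in> carrier_mat k n" and R: "R \<in> carrier_mat n k" and I: "I \<in> ksubsets k n"
    and ij: "i \<in> I" "j \<in> I" "i \<noteq> j" and ab: "a \<in> {0..<n} - I" "b \<in> {0..<n} - I" "a \<noteq> b"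
  obtains e1 e2 :: 'a where "e1 = 1 \<or> e1 = -1" "e2 = 1 \<or> e2 = -1"
    "DeltaL k L I * DeltaL k L (swap2 I i j a b)
      = e1 * (DeltaL k L (swap1 I i a) * DeltaL k L (swap1 I j b))
        + e2 * (DeltaL k L (swap1 I i b) * DeltaL k L (swap1 I j a))"
    "DeltaR k R I * DeltaR k R (swap2 I i j a b)
      = e1 * (DeltaR k R (swap1 I i a) * DeltaR k R (swap1 I j b))
        + e2 * (DeltaR k R (swap1 I i b) * DeltaR k R (swap1 I j a))"
proof -
  have "finite I" "card I = k" "a \<notin> I" "b \<notin> I"
    using I ab by (auto simp: ksubsets_def intro: finite_subset)
  then obtain e1 e2 :: 'a where e: "e1 = 1 \<or> e1 = -1" "e2 = 1 \<or> e2 = -1"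
    and plucker: "\<And>f. minor_rows k f I * minor_rows k f (swap2 I i j a b)
      = e1 * (minor_rows k f (swap1 I i a) * minor_rows k f (swap1 I j b))
        + e2 * (minor_rows k f (swap1 I i b) * minor_rows k f (swap1 I j a))"
    using plucker_minor_rows[of I k i j a b] ij ab by blast
  have "J \<in> ksubsets k n"
    if "J \<in> {I, swap2 I i j a b, swap1 I i a, swap1 I j b, swap1 I i b, swap1 I j a}" for J
    using that I ij ab by (auto intro!: swap1_in_ksubsets swap2_in_ksubsets)
  then have "J \<subseteq> {0..<n}" "card J = k"
    if "J \<in> {I, swap2 I i j a b, swap1 I i a, swap1 I j b, swap1 I i b, swap1 I j a}" for J
    using that by (simp_all add: ksubsets_def)
  then show thesis
    using that[OF e] plucker DeltaL_eq_minor_rows[OF L] DeltaR_eq_minor_rows[OF R] by simp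
qed

lemma (in Lam_embedding) DeltaR_ratio_const:
  fixes L R :: "'a mat"
  assumes L: "L \<in> carrier_mat k n" and R: "R \<in> carrier_mat n k" and I: "I \<in> ksubsets k n"
    and ij: "i \<in> I" "j \<in> I" "i \<noteq> j" and ab: "a \<in> {0..<n} - I" "b \<in> {0..<n} - I" "a \<noteq> b"
    and units: "\<And>J. J \<in> {I, swap2 I i j a b, swap1 I i a, swap1 I j b, swap1 I i b, swap1 I j a}
      \<Longrightarrow> hh k L R J \<in> Lam_image_units"
    and sq: "\<exists>q \<in> Lam d. Bc k L R I i j a b = (emb q)\<^sup>2"
  shows "\<exists>c. DeltaR k R (swap1 I i a) * DeltaR k R (swap1 I j b)
      / (DeltaR k R (swap1 I i b) * DeltaR k R (swap1 I j a)) = emb (lconst c)"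
proof -
  let ?h = "hh k L R"
  let ?P1 = "DeltaL k L (swap1 I i a) * DeltaL k L (swap1 I j b)"
    and ?P2 = "DeltaL k L (swap1 I i b) * DeltaL k L (swap1 I j a)"
    and ?Q1 = "DeltaR k R (swap1 I i a) * DeltaR k R (swap1 I j b)"
    and ?Q2 = "DeltaR k R (swap1 I i b) * DeltaR k R (swap1 I j a)"
  obtain e1 e2 where e: "e1 = 1 \<or> e1 = -1" "e2 = 1 \<or> e2 = -1"
    and plucker: "DeltaL k L I * DeltaL k L (swap2 I i j a b) = e1 * ?P1 + e2 * ?P2"
      "DeltaR k R I * DeltaR k R (swap2 I i j a b) = e1 * ?Q1 + e2 * ?Q2"
    using DeltaL_DeltaR_plucker[OF L R I ij ab] by blast
  obtain q where q: "q \<in> Lam d" "Bc k L R I i j a b = (emb q)\<^sup>2"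
    using sq by blast
  have H: "?h I * ?h (swap2 I i j a b) \<in> Lam_image_units"
    using units by (intro Lam_image_units_mult) auto
  have "?h I * ?h (swap2 I i j a b)
      = (DeltaL k L I * DeltaL k L (swap2 I i j a b)) * (DeltaR k R I * DeltaR k R (swap2 I i j a b))"
    by (simp add: hh_def ac_simps)
  then have H_eq: "?h I * ?h (swap2 I i j a b) = (e1 * ?P1 + e2 * ?P2) * (e1 * ?Q1 + e2 * ?Q2)"
    unfolding plucker .
  have h1: "?P1 * ?Q1 = ?h (swap1 I i a) * ?h (swap1 I j b)"
    and h2: "?P2 * ?Q2 = ?h (swap1 I i b) * ?h (swap1 I j a)"
    by (simp_all add: hh_def ac_simps)
  have u1: "?P1 * ?Q1 \<in> Lam_image_units" and u2: "?P2 * ?Q2 \<in> Lam_image_units"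
    unfolding h1 h2 using units by (auto intro: Lam_image_units_mult)
  have "(?h I * ?h (swap2 I i j a b) - ?P1 * ?Q1 - ?P2 * ?Q2)\<^sup>2 - 4 * (?P1 * ?Q1) * (?P2 * ?Q2)
      = (emb q)\<^sup>2"
    unfolding h1 h2 q(2)[symmetric] Bc_def Ac_def by (simp add: mult.assoc)
  from ratio_const_if_discriminant_square[OF e H H_eq u1 u2 this emb_in_Lam_image[OF q(1)]]
  show ?thesis .
qed

theorem mainTheorem5:
  fixes d k n :: nat
    and emb :: "lpoly \<Rightarrow> 'a :: alg_closed_field"
    and L R :: "'a mat"
    and I :: "nat set" and i j a b :: nat
  assumes d: "1 \<le> d" and kn: "1 \<le> k" "k \<le> n"
    and closure: "is_alg_closure_emb d emb"
    and dimL: "L \<in> carrier_mat k n" and dimR: "R \<in> carrier_mat n k"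
    and SA1: "\<forall>J \<in> ksubsets k n. DeltaR k R J \<noteq> 0"
    and SA2: "\<forall>J \<in> ksubsets k n. DeltaL k L J \<noteq> 0 \<longrightarrow>
                (\<exists>u. unit_of_Lam d u \<and> hh k L R J = emb u)"
    and I: "I \<in> ksubsets k n"
    and ij: "i \<in> I" "j \<in> I" "i \<noteq> j"
    and ab: "a \<in> {0..<n} - I" "b \<in> {0..<n} - I" "a \<noteq> b"
    and nz: "hh k L R I * hh k L R (swap2 I i j a b) * hh k L R (swap1 I i a)
             * hh k L R (swap1 I i b) * hh k L R (swap1 I j a) * hh k L R (swap1 I j b) \<noteq> 0"
    and sq: "\<exists>q \<in> Lam d. Bc k L R I i j a b = (emb q)^2"
  shows "\<exists>c :: complex. Yc k R I i j a b = emb (lconst c)"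
proof -
  interpret Lam_embedding d emb
    by (rule Lam_embedding_if_alg_closure_emb[OF closure])
  have unit: "hh k L R J \<in> Lam_image_units" if "J \<in> ksubsets k n" "hh k L R J \<noteq> 0" for J
    using SA2 that emb_unit_in_Lam_image_units by (auto simp: hh_def)
  have units: "hh k L R J \<in> Lam_image_units"
    if "J \<in> {I, swap2 I i j a b, swap1 I i a, swap1 I j b, swap1 I i b, swap1 I j a}" for J
    using that nz I ij ab by (auto intro!: unit swap1_in_ksubsets swap2_in_ksubsets)
  obtain c where c: "DeltaR k R (swap1 I i a) * DeltaR k R (swap1 I j b)
      / (DeltaR k R (swap1 I i b) * DeltaR k R (swap1 I j a)) = emb (lconst c)"
    using DeltaR_ratio_const[OF dimL dimR I ij ab units sq] by blast
  let ?s = "sgn ((int i - int a) * (int i - int b) * (int j - int a) * (int j - int b))"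
  have "Yc k R I i j a b = - of_int ?s * (DeltaR k R (swap1 I i a) * DeltaR k R (swap1 I j b)
      / (DeltaR k R (swap1 I i b) * DeltaR k R (swap1 I j a)))"
    unfolding Yc_def by simp
  also have "\<dots> = emb (lconst (of_int (- ?s) * c))"
    unfolding c of_int_mult_emb_lconst[symmetric] by simp
  finally show ?thesis ..
qed

end
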